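(* For every graph $G$ on $[n]$ and every $k=2,3,\dots,n-2$, the polynomial $$\theta_k=\sum_{ij\in G}s_{ij}\sum_{\ell=0}^{k}x_i^{k-\ell}x_j^{\ell}$$ vanishes on the scattering correspondence $\mathcal V_G$.
   Context: $G$ is a simple graph on $[n]$, and $G_i$ denotes the set of neighbours of vertex $i$. The variables are $s_{ij}$ ($ij\in G$) and $x_1,\dots,x_n$. $\mathcal K_G$ is defined by $\sum_{j\in G_i}s_{ij}=0$ for $i\in[n]$. $\mathcal H$ is the union of the hyperplanes $x_i=x_j$ for $i<j$. The scattering correspondence is $$\mathcal V_G=\{(s,x)\in\mathbb P^{|G|-1}\times(\mathbb P^{n-1}\setminus\mathcal H): s\in\mathcal K_G,\ \textstyle\sum_{j\in G_i}s_{ij}/(x_i-x_j)=0\ \text{for all } i\in[n]\}.$$ *)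

theory Defs
  imports Complex_Main
begin

definition simple_graph :: "nat \<Rightarrow> (nat \<Rightarrow> nat \<Rightarrow> bool) \<Rightarrow> bool" where
  "simple_graph n E \<longleftrightarrow>
     (\<forall>i j. E i j \<longrightarrow> i \<in> {1..n} \<and> j \<in> {1..n}) \<and>
     (\<forall>i j. E i j \<longrightarrow> E j i) \<and> (\<forall>i. \<not> E i i)"

definition nbrs :: "nat \<Rightarrow> (nat \<Rightarrow> nat \<Rightarrow> bool) \<Rightarrow> nat \<Rightarrow> nat set" where
  "nbrs n E i = {j \<in> {1..n}. E i j}"

definition edges :: "nat \<Rightarrow> (nat \<Rightarrow> nat \<Rightarrow> bool) \<Rightarrow> (nat \<times> nat) set" where
  "edges n E = {(i,j). i \<in> {1..n} \<and> j \<in> {1..n} \<and> i < j \<and> E i j}"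

text \<open>The coordinates s_ij of P^{|G|-1} are represented by a symmetric
  function s (only its values on edges matter), not all zero on edges; x is a point of
  P^{n-1} off the hyperplanes x_i = x_j (so all x_i are pairwise distinct, and x is not
  zero).  All defining equations are homogeneous, so this is independent of the choice of
  representatives.\<close>
definition scattering_corr ::
  "nat \<Rightarrow> (nat \<Rightarrow> nat \<Rightarrow> bool) \<Rightarrow> (nat \<Rightarrow> nat \<Rightarrow> complex) \<Rightarrow> (nat \<Rightarrow> complex) \<Rightarrow> bool" where
  "scattering_corr n E s x \<longleftrightarrow>
     (\<forall>i j. s i j = s j i) \<and>
     (\<exists>(i,j)\<in>edges n E. s i j \<noteq> 0) \<and>
     (\<exists>i\<in>{1..n}. x i \<noteq> 0) \<and>
     (\<forall>i\<in>{1..n}. \<forall>j\<in>{1..n}. i < j \<longrightarrow> x i \<noteq> x j) \<and>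
     (\<forall>i\<in>{1..n}. (\<Sum>j\<in>nbrs n E i. s i j) = 0) \<and>
     (\<forall>i\<in>{1..n}. (\<Sum>j\<in>nbrs n E i. s i j / (x i - x j)) = 0)"

definition theta :: "nat \<Rightarrow> (nat \<Rightarrow> nat \<Rightarrow> bool) \<Rightarrow> nat \<Rightarrow>
    (nat \<Rightarrow> nat \<Rightarrow> complex) \<Rightarrow> (nat \<Rightarrow> complex) \<Rightarrow> complex" where
  "theta n E k s x = (\<Sum>(i,j)\<in>edges n E. s i j * (\<Sum>l=0..k. x i ^ (k - l) * x j ^ l))"

end

theory Submission
  imports Defs
begin

text \<open>Multiplying the i-th scattering equation by x_i^(k+1) and summing over all vertices
  gives a sum over ordered pairs of adjacent vertices. Grouping each edge ij with its reverse
  ji and using the symmetry of s, the two terms combine to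
  s_ij (x_i^(k+1) - x_j^(k+1)) / (x_i - x_j), which is the ij-summand of theta_k.\<close>

lemma sum_powers_eq_divide:
  fixes a b :: "'a::field"
  assumes "a \<noteq> b"
  shows "(\<Sum>l=0..k. a ^ (k - l) * b ^ l) = (a ^ Suc k - b ^ Suc k) / (a - b)"
proof -
  have "b ^ Suc k - a ^ Suc k = (b - a) * (\<Sum>l=0..k. a ^ (k - l) * b ^ l)"
    using diff_power_eq_sum[of b k a] by (simp add: atLeast0AtMost lessThan_Suc_atMost mult.commute)
  then have "a ^ Suc k - b ^ Suc k = (a - b) * (\<Sum>l=0..k. a ^ (k - l) * b ^ l)"
    by (simp add: algebra_simps)
  then show ?thesis
    using assms by simp
qed

lemma finite_edges: "finite (edges n E)"
  by (rule finite_subset[of _ "{1..n} \<times> {1..n}"]) (auto simp: edges_def)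

lemma Sigma_nbrs_eq_edges_Un_swap:
  assumes "simple_graph n E"
  shows "Sigma {1..n} (nbrs n E) = edges n E \<union> prod.swap ` edges n E"
proof -
  have "i < j \<or> j < i" and "E j i" if "E i j" for i j
    using assms that linorder_neqE_nat unfolding simple_graph_def by metis+
  then show ?thesis
    by (auto simp: nbrs_def edges_def image_iff) blast
qed

lemma sum_nbrs_eq_sum_edges:
  assumes "simple_graph n E"
  shows "(\<Sum>i\<in>{1..n}. \<Sum>j\<in>nbrs n E i. f i j) = (\<Sum>(i,j)\<in>edges n E. f i j + f j i)"
proof -
  have "(\<Sum>i\<in>{1..n}. \<Sum>j\<in>nbrs n E i. f i j) = (\<Sum>(i,j)\<in>Sigma {1..n} (nbrs n E). f i j)"
    by (rule sum.Sigma) (auto simp: nbrs_def)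
  also have "\<dots> = (\<Sum>(i,j)\<in>edges n E. f i j) + (\<Sum>(i,j)\<in>prod.swap ` edges n E. f i j)"
    unfolding Sigma_nbrs_eq_edges_Un_swap[OF assms]
    by (rule sum.union_disjoint) (auto simp: finite_edges, auto simp: edges_def)
  also have "(\<Sum>(i,j)\<in>prod.swap ` edges n E. f i j) = (\<Sum>(i,j)\<in>edges n E. f j i)"
    by (simp add: sum.reindex case_prod_unfold)
  finally show ?thesis
    by (simp add: sum.distrib case_prod_unfold)
qed

lemma theta_eq_sum_scattering_equations:
  assumes "simple_graph n E"
    and sym: "\<And>i j. s i j = s j i"
    and distinct: "\<And>i j. i \<in> {1..n} \<Longrightarrow> j \<in> {1..n} \<Longrightarrow> i < j \<Longrightarrow> x i \<noteq> x j"
  shows "theta n E k s x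
    = (\<Sum>i\<in>{1..n}. x i ^ Suc k * (\<Sum>j\<in>nbrs n E i. s i j / (x i - x j)))"
proof -
  have "(\<Sum>i\<in>{1..n}. x i ^ Suc k * (\<Sum>j\<in>nbrs n E i. s i j / (x i - x j)))
      = (\<Sum>(i,j)\<in>edges n E. s i j * x i ^ Suc k / (x i - x j) + s j i * x j ^ Suc k / (x j - x i))"
    unfolding sum_distrib_left
    using sum_nbrs_eq_sum_edges[OF assms(1), of "\<lambda>i j. s i j * x i ^ Suc k / (x i - x j)"]
    by (simp add: mult.commute)
  also have "\<dots> = theta n E k s x"
    unfolding theta_def
  proof (rule sum.cong, safe)
    fix i j assume "(i, j) \<in> edges n E"
    then have "x i \<noteq> x j"
      using distinct by (auto simp: edges_def)
    have "s j i * x j ^ Suc k / (x j - x i) = - (s i j * x j ^ Suc k / (x i - x j))"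
      by (simp add: sym[of j i] minus_diff_eq[symmetric, of "x i"] del: minus_diff_eq)
    then show "s i j * x i ^ Suc k / (x i - x j) + s j i * x j ^ Suc k / (x j - x i)
        = s i j * (\<Sum>l=0..k. x i ^ (k - l) * x j ^ l)"
      using \<open>x i \<noteq> x j\<close>
      by (simp add: sum_powers_eq_divide diff_divide_distrib right_diff_distrib)
  qed
  finally show ?thesis ..
qed

theorem mainTheorem5:
  fixes n k :: nat and E :: "nat \<Rightarrow> nat \<Rightarrow> bool"
    and s :: "nat \<Rightarrow> nat \<Rightarrow> complex" and x :: "nat \<Rightarrow> complex"
  assumes "simple_graph n E"
    and "2 \<le> k" and "k + 2 \<le> n"
    and "scattering_corr n E s x"
  shows "theta n E k s x = 0"
proof -
  have sym: "\<And>i j. s i j = s j i"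
    and distinct: "\<And>i j. i \<in> {1..n} \<Longrightarrow> j \<in> {1..n} \<Longrightarrow> i < j \<Longrightarrow> x i \<noteq> x j"
    and scattering: "\<And>i. i \<in> {1..n} \<Longrightarrow> (\<Sum>j\<in>nbrs n E i. s i j / (x i - x j)) = 0"
    using assms(4) unfolding scattering_corr_def by blast+
  have "theta n E k s x = (\<Sum>i\<in>{1..n}. x i ^ Suc k * (\<Sum>j\<in>nbrs n E i. s i j / (x i - x j)))"
    by (rule theta_eq_sum_scattering_equations[OF assms(1) sym distinct])
  also have "\<dots> = 0"
    by (simp add: scattering)
  finally show ?thesis .
qed

end
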